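(* Let $G_0,G_1\in\mathbb{Z}$, let $(G_n)_{n\ge0}$ satisfy $G_n=G_{n-1}+G_{n-2}$ for $n\ge2$, and let $\mu = G_1^2 - G_0 G_1 - G_0^2$. Let $k \geq 1$ be odd and set $\ell_k = \gcd(G_{k+1} - G_1,\, G_{k+2} - G_2)$. If $2\mu$ divides $\ell_k$, then $\mathcal{G}^2_{G_0,G_1}(k\ell) = |2\mu|$ for all odd integers $\ell \geq 1$.
   Context: $\mathcal{G}^2_{G_0,G_1}(m)=\gcd\{\sum_{i=1}^m G_{n+i}^2 : n\ge 0\}$ (nonnegative gcd of this infinite set of integers). *)

theory Defs
  imports Main
begin

fun gfib :: "int \<Rightarrow> int \<Rightarrow> nat \<Rightarrow> int" where
  "gfib a b 0 = a"
| "gfib a b (Suc 0) = b"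
| "gfib a b (Suc (Suc n)) = gfib a b (Suc n) + gfib a b n"

definition gcd_sq_sums :: "int \<Rightarrow> int \<Rightarrow> nat \<Rightarrow> int" where
  "gcd_sq_sums a b m = Gcd {(\<Sum>i=1..m. (gfib a b (n + i))^2) | n. True}"

end

theory Submission
  imports Defs "HOL-Number_Theory.Cong"
begin

text \<open>By telescoping, \<open>S\<^sub>n = \<Sum>i=1..m. G(n+i)\<^sup>2 = G(n+m) G(n+m+1) - G(n) G(n+1)\<close>.
  The hypothesis says that \<open>G\<close> is periodic with period \<open>k\<close> modulo \<open>2\<mu>\<close>, hence also with
  period \<open>m = k l\<close>, and then every such sum vanishes modulo \<open>2\<mu>\<close>. Conversely, for odd
  \<open>m\<close> Cassini's identity \<open>G(n+1)\<^sup>2 - G(n) G(n+1) - G(n)\<^sup>2 = (-1)\<^sup>n \<mu>\<close> gives the integer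
  combination \<open>S\<^sub>2 - 3 S\<^sub>1 + S\<^sub>0 = 2\<mu>\<close>, so \<open>2\<mu>\<close> is the gcd of the \<open>S\<^sub>n\<close> up to sign.\<close>

definition gfib_sq_sum :: "int \<Rightarrow> int \<Rightarrow> nat \<Rightarrow> nat \<Rightarrow> int" where
  "gfib_sq_sum a b m n = (\<Sum>i=1..m. (gfib a b (n + i))^2)"

lemma gcd_sq_sums_eq_Gcd_range: "gcd_sq_sums a b m = Gcd (range (gfib_sq_sum a b m))"
  unfolding gcd_sq_sums_def gfib_sq_sum_def by (simp add: full_SetCompr_eq)

lemma gfib_shift: "gfib a b (n + k) = gfib (gfib a b k) (gfib a b (Suc k)) n"
  by (induction a b n rule: gfib.induct) simp_all

lemma gfib_cong:
  assumes "[a = a'] (mod d)" and "[b = b'] (mod d)"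
  shows "[gfib a b n = gfib a' b' n] (mod d)"
  using assms by (induction a b n rule: gfib.induct) (simp_all add: cong_add)

lemma gfib_cassini:
  "(gfib a b (Suc n))^2 - gfib a b n * gfib a b (Suc n) - (gfib a b n)^2
     = (-1)^n * (b^2 - a*b - a^2)"
proof (induction n)
  case 0
  then show ?case by simp
next
  case (Suc n)
  then show ?case by (simp add: power2_eq_square algebra_simps)
qed

lemma gfib_sq_sum_telescope:
  "gfib_sq_sum a b m n = gfib a b (n + m) * gfib a b (Suc (n + m)) - gfib a b n * gfib a b (Suc n)"
proof (induction m)
  case 0
  then show ?case by (simp add: gfib_sq_sum_def)
next
  case (Suc m)
  have "gfib_sq_sum a b (Suc m) n = gfib_sq_sum a b m n + (gfib a b (Suc (n + m)))^2"
    by (simp add: gfib_sq_sum_def)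
  with Suc show ?case by (simp add: power2_eq_square algebra_simps)
qed

lemma gfib_cong_period:
  assumes "[gfib a b (k + 1) = gfib a b 1] (mod d)" and "[gfib a b (k + 2) = gfib a b 2] (mod d)"
  shows "[gfib a b (n + j * k) = gfib a b n] (mod d)"
proof -
  \<comment> \<open>subtracting the two hypotheses gives the missing initial value \<open>G(k) \<equiv> G(0)\<close>\<close>
  have "[gfib a b (k + 2) - gfib a b (k + 1) = gfib a b 2 - gfib a b 1] (mod d)"
    using assms(2,1) by (rule cong_diff)
  then have "[gfib a b k = a] (mod d)"
    by (simp add: numeral_2_eq_2)
  with assms(1) have period: "[gfib a b (n' + k) = gfib a b n'] (mod d)" for n'
    unfolding gfib_shift[of _ _ _ k] by (simp add: gfib_cong)
  show ?thesis
  proof (induction j)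
    case 0
    then show ?case by simp
  next
    case (Suc j)
    from period[of "n + j * k"] have "[gfib a b (n + Suc j * k) = gfib a b (n + j * k)] (mod d)"
      by (simp add: algebra_simps)
    then show ?case using Suc.IH by (rule cong_trans)
  qed
qed

lemma gfib_sq_sum_cong_0:
  assumes "[gfib a b (k + 1) = gfib a b 1] (mod d)" and "[gfib a b (k + 2) = gfib a b 2] (mod d)"
  shows "[gfib_sq_sum a b (j * k) n = 0] (mod d)"
proof -
  have "[gfib a b (n + j * k) * gfib a b (Suc n + j * k) = gfib a b n * gfib a b (Suc n)] (mod d)"
    using gfib_cong_period[OF assms] by (intro cong_mult)
  then show ?thesis
    unfolding gfib_sq_sum_telescope cong_iff_dvd_diff by simp
qed

lemma gfib_sq_sum_combination:
  assumes "odd m"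
  shows "gfib_sq_sum a b m 2 - 3 * gfib_sq_sum a b m 1 + gfib_sq_sum a b m 0
           = 2 * (b^2 - a*b - a^2)"
proof -
  define \<mu> where "\<mu> = b^2 - a*b - a^2"
  have second_order: "gfib a b (j+2) * gfib a b (j+3) - 3 * (gfib a b (j+1) * gfib a b (j+2))
      + gfib a b j * gfib a b (j+1) = - ((-1)^j * \<mu>)" for j
    using gfib_cassini[of a b j] by (simp add: \<mu>_def eval_nat_numeral power2_eq_square algebra_simps)
  have "(-1::int)^m = -1"
    using assms by simp
  with second_order[of 0] second_order[of m] show ?thesis
    unfolding gfib_sq_sum_telescope \<mu>_def[symmetric] by (simp add: algebra_simps eval_nat_numeral)
qed

theorem theorem4p11:
  fixes G0 G1 :: int and k :: nat
  assumes "k \<ge> 1" and "odd k"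
    and "2 * (G1^2 - G0 * G1 - G0^2) dvd
           gcd (gfib G0 G1 (k + 1) - gfib G0 G1 1) (gfib G0 G1 (k + 2) - gfib G0 G1 2)"
  shows "\<forall>l::nat. l \<ge> 1 \<and> odd l \<longrightarrow>
           gcd_sq_sums G0 G1 (k * l) = \<bar>2 * (G1^2 - G0 * G1 - G0^2)\<bar>"
proof (intro allI impI)
  fix l :: nat
  assume "l \<ge> 1 \<and> odd l"
  with \<open>odd k\<close> have "odd (k * l)" by simp
  define d where "d = 2 * (G1^2 - G0 * G1 - G0^2)"
  define S where "S = gfib_sq_sum G0 G1 (k * l)"
  have "[gfib G0 G1 (k + 1) = gfib G0 G1 1] (mod d)" "[gfib G0 G1 (k + 2) = gfib G0 G1 2] (mod d)"
    using assms(3) unfolding d_def cong_iff_dvd_diff by (auto dest: dvd_trans)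
  then have "d dvd S n" for n
    using gfib_sq_sum_cong_0[of G0 G1 k d l n] by (simp add: S_def cong_0_iff mult.commute)
  then have "d dvd Gcd (range S)"
    by (auto intro: Gcd_greatest)
  moreover have "Gcd (range S) dvd S 2 - 3 * S 1 + S 0"
    by (intro dvd_add dvd_diff dvd_mult Gcd_dvd) auto
  then have "Gcd (range S) dvd d"
    by (simp only: S_def d_def gfib_sq_sum_combination[OF \<open>odd (k * l)\<close>])
  ultimately show "gcd_sq_sums G0 G1 (k * l) = \<bar>2 * (G1^2 - G0 * G1 - G0^2)\<bar>"
    unfolding gcd_sq_sums_eq_Gcd_range S_def[symmetric] d_def[symmetric]
    by (intro zdvd_antisym_nonneg) auto
qed

end
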